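(* Let $m,d,n\ge1$, $p,q,\lambda>0$, $g(\alpha)=\|\alpha/\lambda\|_p^q$, and let $\mathfrak{D}$ be the set of matrices in $\mathbb{R}^{m\times d}$ with unit $\ell_2$-norm columns. Let $\mathbb{P}$ be a probability distribution on $\mathbb{R}^m$ with $\mathbb{P}(\|x\|_2\le1)=1$, and let $X=[x_1,\dots,x_n]$ consist of $n$ i.i.d. samples from $\mathbb{P}$. Define $\Lambda_n(L)=\mathbb{P}(L_X>L)$ and $$\Gamma_n(\gamma)=\sup_{D\in\mathfrak{D}}\mathbb{P}\big(|F_X(D)-\mathbb{E}_{x\sim\mathbb{P}}f_x(D)|>\gamma\big).$$ Then $\Lambda_n(L)=0$ for every $L\ge\lambda\, d^{(1-1/p)_+}(1/2)^{1/q}$, and $$\Gamma_n(\tau/\sqrt8)\le2\exp(-n\tau^2)\quad\text{for all }0\le\tau<+\infty.$$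
   Context: For $x\in\mathbb{R}^m$ and $D\in\mathbb{R}^{m\times d}$, $f_x(D)=\inf_{\alpha\in\mathbb{R}^d}\tfrac12\|x-D\alpha\|_2^2+g(\alpha)$, and $F_X(D)=\frac1n\sum_{i=1}^nf_{x_i}(D)$. Further $L_X=\frac1n\sum_{i=1}^n\|x_i\|_2\cdot\lambda\cdot d^{(1-1/p)_+}(\tfrac12\|x_i\|_2^2)^{1/q}$, where $(t)_+=\max\{t,0\}$. For $0<p<1$, $\|\cdot\|_p$ is the $\ell_p$ quasi-norm. *)

theory Defs
  imports "HOL-Analysis.Analysis" "HOL-Probability.Probability"
begin

definition lp_norm :: "real \<Rightarrow> real^'d \<Rightarrow> real" where
  "lp_norm p a = (\<Sum>i\<in>UNIV. \<bar>a $ i\<bar> powr p) powr (1 / p)"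

definition reg_g :: "real \<Rightarrow> real \<Rightarrow> real \<Rightarrow> real^'d \<Rightarrow> real" where
  "reg_g p q lam a = lp_norm p ((1 / lam) *\<^sub>R a) powr q"

definition f_loss :: "real \<Rightarrow> real \<Rightarrow> real \<Rightarrow> real^'m \<Rightarrow> real^'d^'m \<Rightarrow> real" where
  "f_loss p q lam x D = (INF a\<in>(UNIV :: (real^'d) set). (1/2) * (norm (x - D *v a))^2 + reg_g p q lam a)"

definition F_emp :: "real \<Rightarrow> real \<Rightarrow> real \<Rightarrow> nat \<Rightarrow> (nat \<Rightarrow> real^'m) \<Rightarrow> real^'d^'m \<Rightarrow> real" where
  "F_emp p q lam n X D = (1 / real n) * (\<Sum>i<n. f_loss p q lam (X i) D)"

definition L_emp :: "real \<Rightarrow> real \<Rightarrow> real \<Rightarrow> nat \<Rightarrow> (nat \<Rightarrow> real^'m) \<Rightarrow> 'd itself \<Rightarrow> real" where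
  "L_emp p q lam n X _ = (1 / real n) * (\<Sum>i<n. norm (X i) * lam
      * real CARD('d) powr (max (1 - 1/p) 0) * ((1/2) * (norm (X i))^2) powr (1/q))"

definition unit_col_dicts :: "(real^'d^'m) set" where
  "unit_col_dicts = {D. \<forall>j. norm (column j D) = 1}"

end

theory Submission
  imports Defs
begin

text \<open>
  Taking \<open>\<alpha> = 0\<close> shows \<open>0 \<le> f\<^sub>x(D) \<le> \<parallel>x\<parallel>\<^sup>2/2 \<le> 1/2\<close> for every dictionary
  and every \<open>x\<close> in the unit ball. The bound on \<open>L\<^sub>X\<close> holds for every sample in the
  unit ball, hence almost surely. For a fixed dictionary, \<open>F\<^sub>X(D)\<close> is the mean of \<open>n\<close>
  i.i.d. copies of \<open>f\<^sub>x(D)\<close> with values in \<open>[0, 1/2]\<close>, and Hoeffding's inequality with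
  deviation \<open>\<tau>/\<surd>8\<close> gives exactly \<open>2 exp(-n\<tau>\<^sup>2)\<close>, uniformly in \<open>D\<close>.
\<close>

lemma reg_g_nonneg: "reg_g p q lam a \<ge> 0"
  unfolding reg_g_def by simp

lemma reg_g_zero [simp]: "reg_g p q lam 0 = 0"
  unfolding reg_g_def lp_norm_def by simp

lemma bdd_below_lasso_objective:
  "bdd_below ((\<lambda>a. (1/2) * (norm (x - D *v a))^2 + reg_g p q lam a) ` UNIV)"
  by (rule bdd_belowI[where m=0]) (auto intro!: add_nonneg_nonneg reg_g_nonneg)

lemma f_loss_nonneg: "f_loss p q lam x D \<ge> 0"
  unfolding f_loss_def
  by (rule cINF_greatest) (auto intro!: add_nonneg_nonneg reg_g_nonneg)

lemma f_loss_le_half_norm_sq: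
  fixes D :: "real^'d^'m"
  shows "f_loss p q lam x D \<le> (1/2) * (norm x)^2"
proof -
  have "f_loss p q lam x D \<le> (1/2) * (norm (x - D *v 0))^2 + reg_g p q lam (0::real^'d)"
    unfolding f_loss_def by (rule cINF_lower[OF bdd_below_lasso_objective]) simp
  then show ?thesis by simp
qed

lemma f_loss_less_iff:
  "f_loss p q lam x D < y \<longleftrightarrow> (\<exists>a. (1/2) * (norm (x - D *v a))^2 + reg_g p q lam a < y)"
  unfolding f_loss_def using cINF_less_iff[OF _ bdd_below_lasso_objective] by simp

text \<open>An infimum of continuous functions has open strict sublevel sets.\<close>

lemma borel_measurable_f_loss: "(\<lambda>x. f_loss p q lam x D) \<in> borel_measurable borel"
proof (rule borel_measurableI_less)
  fix y
  have "{x\<in>space borel. f_loss p q lam x D < y} =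
      (\<Union>a. {x. (1/2) * (norm (x - D *v a))^2 + reg_g p q lam a < y})"
    by (auto simp: f_loss_less_iff simp del: of_nat_power)
  also have "open \<dots>"
    by (intro open_UN ballI open_Collect_less continuous_intros)
  finally show "{x\<in>space borel. f_loss p q lam x D < y} \<in> sets borel" by simp
qed

lemma L_emp_le_if_norms_le_1:
  assumes "\<forall>i<n. norm (X i) \<le> 1" and "n > 0" and "lam \<ge> 0" and "q \<ge> 0"
  shows "L_emp p q lam n X TYPE('d) \<le> lam * real CARD('d) powr (max (1 - 1/p) 0) * (1/2) powr (1/q)"
proof -
  define c where "c = lam * real CARD('d) powr (max (1 - 1/p) 0)"
  have "c \<ge> 0" unfolding c_def using assms by simp
  have "L_emp p q lam n X TYPE('d) = (1 / real n) * (\<Sum>i<n. norm (X i) * c * ((1/2) * (norm (X i))^2) powr (1/q))"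
    unfolding L_emp_def c_def by (simp add: mult.assoc)
  also have "\<dots> \<le> (1 / real n) * (\<Sum>i<n. c * (1/2) powr (1/q))"
  proof (intro mult_left_mono sum_mono)
    fix i assume "i \<in> {..<n}"
    then have norm_le: "norm (X i) \<le> 1" using assms(1) by auto
    have "((1/2) * (norm (X i))^2) powr (1/q) \<le> (1/2) powr (1/q)"
      using norm_le \<open>q \<ge> 0\<close> by (intro powr_mono2) (auto simp: power_le_one)
    moreover have "norm (X i) * c \<le> c" using norm_le \<open>c \<ge> 0\<close> by (simp add: mult_left_le_one_le)
    ultimately show "norm (X i) * c * ((1/2) * (norm (X i))^2) powr (1/q) \<le> c * (1/2) powr (1/q)"
      using \<open>c \<ge> 0\<close> by (intro mult_mono) auto
  qed simp
  also have "\<dots> = c * (1/2) powr (1/q)" using \<open>n > 0\<close> by simp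
  finally show ?thesis unfolding c_def .
qed

lemma unit_col_dicts_nonempty: "(unit_col_dicts :: (real^'d^'m) set) \<noteq> {}"
proof -
  fix k :: 'm
  define D :: "real^'d^'m" where "D = (\<chi> i j. axis k 1 $ i)"
  have "column j D = axis k 1" for j unfolding D_def column_def by (simp add: vec_eq_iff)
  then have "D \<in> unit_col_dicts" unfolding unit_col_dicts_def by simp
  then show ?thesis by auto
qed

lemma AE_PiM_all_components:
  assumes "prob_space P" and "finite I" and "AE x in P. Q x"
  shows "AE X in PiM I (\<lambda>_. P). \<forall>i\<in>I. Q (X i)"
  using assms by (intro AE_finite_allI AE_PiM_component) auto

lemma indep_vars_PiM_components:
  assumes "prob_space P" and "I \<noteq> {}"
  shows "prob_space.indep_vars (PiM I (\<lambda>_. P)) (\<lambda>_. P) (\<lambda>i X. X i) I"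
proof -
  interpret product_prob_space "\<lambda>_. P" I
    by (simp add: assms product_prob_space_def product_sigma_finite_def
        prob_space_imp_sigma_finite product_prob_space_axioms_def)
  have "distr (PiM I (\<lambda>_. P)) (PiM I (\<lambda>_. P)) (\<lambda>X. restrict X I) = distr (PiM I (\<lambda>_. P)) (PiM I (\<lambda>_. P)) (\<lambda>X. X)"
    by (rule distr_cong) (auto simp: space_PiM)
  also have "\<dots> = PiM I (\<lambda>_. P)" by simp
  also have "\<dots> = PiM I (\<lambda>i. distr (PiM I (\<lambda>_. P)) P (\<lambda>X. X i))"
    by (rule PiM_cong) (use distr_PiM_component[of I "\<lambda>_. P"] assms in auto)
  finally show ?thesis
    by (subst prob_space.indep_vars_iff_distr_eq_PiM'[OF prob_space_PiM assms(2)])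
      (auto simp: assms(1))
qed

lemma Hoeffding_PiM_abs_ge:
  fixes f :: "'a \<Rightarrow> real" and a b \<epsilon> :: real
  assumes "prob_space P" and "f \<in> borel_measurable P" and "AE x in P. f x \<in> {a..b}"
    and "a < b" and "finite I" and "I \<noteq> {}" and "\<epsilon> \<ge> 0"
  shows "measure (PiM I (\<lambda>_. P))
           {X \<in> space (PiM I (\<lambda>_. P)). \<bar>(\<Sum>i\<in>I. f (X i)) / real (card I) - (\<integral>x. f x \<partial>P)\<bar> \<ge> \<epsilon>}
         \<le> 2 * exp (- 2 * real (card I) * \<epsilon>\<^sup>2 / (b - a)\<^sup>2)"
proof -
  define M where "M = PiM I (\<lambda>_. P)"
  obtain i0 where "i0 \<in> I" using \<open>I \<noteq> {}\<close> by auto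
  interpret M: prob_space M unfolding M_def by (rule prob_space_PiM) (simp add: assms(1))
  have distr_component: "distr M P (\<lambda>X. X i) = P" if "i \<in> I" for i
    unfolding M_def using that assms(1) by (intro distr_PiM_component) auto
  have measurable_component: "(\<lambda>X. f (X i)) \<in> borel_measurable M" if "i \<in> I" for i
    unfolding M_def using assms(2) that by measurable
  have distr_f_component: "distr M borel (\<lambda>X. f (X i)) = distr P borel f" if "i \<in> I" for i
    using assms(2) that
    by (subst distr_component[of i, symmetric]) (auto simp: distr_distr comp_def M_def)
  have mean: "M.expectation (\<lambda>X. f (X i0)) = (\<integral>x. f x \<partial>P)"
    using assms(2) \<open>i0 \<in> I\<close>
    by (subst distr_component[of i0, symmetric]) (auto simp: integral_distr M_def)
  interpret Hoeffding_ineq_iid M I "\<lambda>i X. f (X i)" "\<lambda>X. f (X i0)" a b "M.expectation (\<lambda>X. f (X i0))"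
  proof unfold_locales
    show "M.indep_vars (\<lambda>_. borel) (\<lambda>i X. f (X i)) I"
      using M.indep_vars_compose2[OF indep_vars_PiM_components[OF assms(1,6), folded M_def],
          of "\<lambda>_. f" "\<lambda>_. borel"]
        assms(2) by auto
    show "AE X in M. f (X i0) \<in> {a..b}"
      unfolding M_def using assms(1,3) \<open>i0 \<in> I\<close>
      by (intro AE_PiM_component[where P="\<lambda>x. f x \<in> {a..b}"]) auto
  qed (use assms \<open>i0 \<in> I\<close> distr_f_component measurable_component in auto)
  show ?thesis
    using Hoeffding_ineq_abs_ge'[of \<epsilon>] assms(4,6,7) by (simp add: mean flip: M_def)
qed

lemma measure_L_emp_gt_eq_0:
  assumes "prob_space P" and "AE x in P. norm x \<le> 1"
    and "n > 0" and "lam \<ge> 0" and "q \<ge> 0"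
    and "L \<ge> lam * real CARD('d) powr (max (1 - 1/p) 0) * (1/2) powr (1/q)"
  shows "measure (PiM {..<n} (\<lambda>_. P))
           {X \<in> space (PiM {..<n} (\<lambda>_. P)). L_emp p q lam n X TYPE('d) > L} = 0"
proof -
  have "AE X in PiM {..<n} (\<lambda>_. P). \<forall>i\<in>{..<n}. norm (X i) \<le> 1"
    using assms(1,2) by (intro AE_PiM_all_components) auto
  then have "AE X in PiM {..<n} (\<lambda>_. P). \<not> L_emp p q lam n X TYPE('d) > L"
  proof eventually_elim
    case (elim X)
    then have "L_emp p q lam n X TYPE('d) \<le> lam * real CARD('d) powr (max (1 - 1/p) 0) * (1/2) powr (1/q)"
      using assms(3-5) by (intro L_emp_le_if_norms_le_1) auto
    then show ?case using assms(6) by simp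
  qed
  then show ?thesis by (simp add: measure_def emeasure_eq_0_AE)
qed

lemma measure_F_emp_deviation_le:
  fixes P :: "(real^'m) measure" and D :: "real^'d^'m"
  assumes "prob_space P" and "sets P = sets borel" and "AE x in P. norm x \<le> 1"
    and "n > 0" and "\<tau> \<ge> 0"
  shows "measure (PiM {..<n} (\<lambda>_. P))
           {X \<in> space (PiM {..<n} (\<lambda>_. P)).
              \<bar>F_emp p q lam n X D - (\<integral>x. f_loss p q lam x D \<partial>P)\<bar> > \<tau> / sqrt 8}
         \<le> 2 * exp (- real n * \<tau>^2)"
proof -
  define f where "f = (\<lambda>x. f_loss p q lam x D)"
  interpret M: prob_space "PiM {..<n} (\<lambda>_. P)" by (rule prob_space_PiM) (simp add: assms(1))
  have f_measurable [measurable]: "f \<in> borel_measurable P"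
    unfolding f_def measurable_cong_sets[OF assms(2) refl] by (rule borel_measurable_f_loss)
  have f_range: "AE x in P. f x \<in> {0..1/2}"
    using assms(3)
  proof eventually_elim
    case (elim x)
    have "f x \<le> (1/2) * (norm x)^2" unfolding f_def by (rule f_loss_le_half_norm_sq)
    also have "\<dots> \<le> 1/2" using elim by (simp add: power_le_one)
    finally show ?case unfolding f_def using f_loss_nonneg by simp
  qed
  have "{..<n} \<noteq> {}" using assms(4) by (simp add: lessThan_empty_iff)
  then have "measure (PiM {..<n} (\<lambda>_. P))
      {X \<in> space (PiM {..<n} (\<lambda>_. P)). \<bar>(\<Sum>i<n. f (X i)) / real n - (\<integral>x. f x \<partial>P)\<bar> \<ge> \<tau> / sqrt 8}
      \<le> 2 * exp (- 2 * real n * (\<tau> / sqrt 8)\<^sup>2 / (1/2 - 0)\<^sup>2)"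
    using Hoeffding_PiM_abs_ge[OF assms(1) f_measurable f_range _ finite_lessThan] assms(5) by simp
  also have "\<dots> = 2 * exp (- real n * \<tau>^2)"
    by (simp add: power_divide)
  finally have Hoeffding: "measure (PiM {..<n} (\<lambda>_. P))
      {X \<in> space (PiM {..<n} (\<lambda>_. P)). \<bar>(\<Sum>i<n. f (X i)) / real n - (\<integral>x. f x \<partial>P)\<bar> \<ge> \<tau> / sqrt 8}
      \<le> 2 * exp (- real n * \<tau>^2)" .
  have "{X \<in> space (PiM {..<n} (\<lambda>_. P)).
      \<bar>(\<Sum>i<n. f (X i)) / real n - (\<integral>x. f x \<partial>P)\<bar> \<ge> \<tau> / sqrt 8} \<in> M.events"
    by measurable
  from M.finite_measure_mono[OF _ this] show ?thesis
    by (rule order_trans[OF _ Hoeffding]) (auto simp: F_emp_def f_def)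
qed

theorem proposition3:
  fixes P :: "(real^'m) measure" and n :: nat and p q lam :: real
  assumes "prob_space P" and "sets P = sets borel"
    and "n \<ge> 1" and "p > 0" and "q > 0" and "lam > 0"
    and "measure P {x \<in> space P. norm x \<le> 1} = 1"
  shows "(\<forall>L. L \<ge> lam * real CARD('d) powr (max (1 - 1/p) 0) * (1/2) powr (1/q) \<longrightarrow>
            measure (PiM {..<n} (\<lambda>_. P))
              {X \<in> space (PiM {..<n} (\<lambda>_. P)). L_emp p q lam n X TYPE('d) > L} = 0)
       \<and> (\<forall>\<tau>::real. \<tau> \<ge> 0 \<longrightarrow>
            (SUP D\<in>(unit_col_dicts :: (real^'d^'m) set).
               measure (PiM {..<n} (\<lambda>_. P))
                 {X \<in> space (PiM {..<n} (\<lambda>_. P)).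
                    \<bar>F_emp p q lam n X D - (\<integral>x. f_loss p q lam x D \<partial>P)\<bar> > \<tau> / sqrt 8})
            \<le> 2 * exp (- real n * \<tau>^2))"
proof -
  have in_ball: "AE x in P. norm x \<le> 1"
    using prob_space.AE_prob_1[OF assms(1,7)] by auto
  have "n > 0" using assms(3) by simp
  show ?thesis
    using measure_L_emp_gt_eq_0[OF assms(1) in_ball \<open>n > 0\<close>, where 'd='d]
      measure_F_emp_deviation_le[OF assms(1,2) in_ball \<open>n > 0\<close>, where 'd='d]
      unit_col_dicts_nonempty[where 'd='d and 'm='m] assms(5,6)
    by (auto intro!: cSUP_least)
qed

end
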